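(* Let $[X,d,m]$ be a metric random walk space with invariant and reversible measure $\nu$ under the standing assumptions below, let $\Omega\subset X$ be a bounded $\nu$-measurable set with $0<\nu(\Omega)<\nu(X)$, let $\psi\in L^\infty(\partial_m\Omega,\nu)$ and $p>1$. If $(m,\nu)$ satisfies a $p$-Poincaré inequality in $\Omega$, then there exists $u_p\in L^p(\Omega,\nu)$ such that $$-\int_{\Omega_m}|(u_p)_\psi(y)-u_p(x)|^{p-2}\big((u_p)_\psi(y)-u_p(x)\big)\,dm_x(y)=0\quad\text{for }\nu\text{-a.e. }x\in\Omega,$$ and moreover $\|u_p\|_{L^\infty(\Omega,\nu)}\le\|\psi\|_{L^\infty(\partial_m\Omega,\nu)}$.
   Context: A metric random walk space $[X,d,m]$ is a Polish metric space $(X,d)$ with a family $m=(m_x)_{x\in X}$ of Borel probability measures such that $x\mapsto m_x(A)$ is Borel measurable for every Borel $A$ and each $m_x$ has finite first moment. $\nu$ is invariant: $\nu(A)=\int_X m_x(A)\,d\nu(x)$ for all $\nu$-measurable $A$; reversible: $dm_x(y)\,d\nu(x)=dm_y(x)\,d\nu(y)$. Standing assumptions: $(X,d,\nu)$ is $\sigma$-finite, $\nu(X)<\infty$, $\nu$ ergodic (every Borel $B$ with $m_x(B)=1$ for all $x\in B$ has $\nu(B)\in\{0,\nu(X)\}$). $\partial_m\Omega:=\{x\in X\setminus\Omega: m_x(\Omega)>0\}$, $\Omega_m:=\Omega\cup\partial_m\Omega$. For $w:\Omega\to\mathbb{R}$, $w_\psi:\Omega_m\to\mathbb{R}$ equals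 $w$ on $\Omega$ and $\psi$ on $\partial_m\Omega$. For $q\ge1$, $(m,\nu)$ satisfies a $q$-Poincaré inequality in $\Omega$ if there is $\lambda>0$ such that $\lambda\int_\Omega|u(x)|^q\,d\nu(x)\le\int_\Omega\int_{\Omega_m}|u_\psi(y)-u(x)|^q\,dm_x(y)\,d\nu(x)+\int_{\partial_m\Omega}|\psi(y)|^q\,d\nu(y)$ for all $u\in L^q(\Omega,\nu)$ and all $\psi\in L^q(\partial_m\Omega,\nu)$. *)

theory Defs
  imports "HOL-Probability.Probability"
begin

text \<open>Metric random walk space [X,d,m] with X = UNIV of a Polish metric type 'a,
  d = dist, m x a Borel probability measure for each x.\<close>

definition mrw_space :: "('a::polish_space \<Rightarrow> 'a measure) \<Rightarrow> bool" where
  "mrw_space m \<longleftrightarrow>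
     (\<forall>x. prob_space (m x) \<and> sets (m x) = sets borel) \<and>
     (\<forall>A \<in> sets borel. (\<lambda>x. emeasure (m x) A) \<in> borel_measurable borel) \<and>
     (\<forall>x. (\<integral>\<^sup>+ y. ennreal (dist x y) \<partial>(m x)) < \<infinity>)"

definition invariant_measure :: "('a::polish_space \<Rightarrow> 'a measure) \<Rightarrow> 'a measure \<Rightarrow> bool" where
  "invariant_measure m \<nu> \<longleftrightarrow>
     (\<forall>A \<in> sets \<nu>. emeasure \<nu> A = (\<integral>\<^sup>+ x. emeasure (m x) A \<partial>\<nu>))"

text \<open>Reversibility: the measures dm_x(y) d\<nu>(x) and dm_y(x) d\<nu>(y) on X \<times> X coincide,
  i.e. they integrate every nonnegative Borel function on X \<times> X identically.\<close>
definition reversible_measure :: "('a::polish_space \<Rightarrow> 'a measure) \<Rightarrow> 'a measure \<Rightarrow> bool" where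
  "reversible_measure m \<nu> \<longleftrightarrow>
     (\<forall>f :: 'a \<times> 'a \<Rightarrow> ennreal. f \<in> borel_measurable borel \<longrightarrow>
        (\<integral>\<^sup>+ x. (\<integral>\<^sup>+ y. f (x, y) \<partial>(m x)) \<partial>\<nu>) = (\<integral>\<^sup>+ x. (\<integral>\<^sup>+ y. f (y, x) \<partial>(m x)) \<partial>\<nu>))"

definition ergodic_measure :: "('a::polish_space \<Rightarrow> 'a measure) \<Rightarrow> 'a measure \<Rightarrow> bool" where
  "ergodic_measure m \<nu> \<longleftrightarrow>
     (\<forall>B \<in> sets borel. (\<forall>x \<in> B. emeasure (m x) B = 1) \<longrightarrow>
        emeasure \<nu> B = 0 \<or> emeasure \<nu> B = emeasure \<nu> UNIV)"

definition m_boundary :: "('a \<Rightarrow> 'a measure) \<Rightarrow> 'a set \<Rightarrow> 'a set" where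
  "m_boundary m \<Omega> = {x. x \<notin> \<Omega> \<and> emeasure (m x) \<Omega> > 0}"

definition m_closure :: "('a \<Rightarrow> 'a measure) \<Rightarrow> 'a set \<Rightarrow> 'a set" where
  "m_closure m \<Omega> = \<Omega> \<union> m_boundary m \<Omega>"

text \<open>w_\<psi>: equal to w on \<Omega> and to \<psi> on the m-boundary (only values on \<Omega>_m matter).\<close>
definition ext_bd :: "'a set \<Rightarrow> ('a \<Rightarrow> real) \<Rightarrow> ('a \<Rightarrow> real) \<Rightarrow> 'a \<Rightarrow> real" where
  "ext_bd \<Omega> w \<psi> y = (if y \<in> \<Omega> then w y else \<psi> y)"

definition Lq_on :: "'a measure \<Rightarrow> 'a set \<Rightarrow> real \<Rightarrow> ('a \<Rightarrow> real) \<Rightarrow> bool" where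
  "Lq_on M A q f \<longleftrightarrow> f \<in> borel_measurable M \<and>
     (\<integral>\<^sup>+ x. indicator A x * ennreal (\<bar>f x\<bar> powr q) \<partial>M) < \<infinity>"

definition Linf_on :: "'a measure \<Rightarrow> 'a set \<Rightarrow> ('a \<Rightarrow> real) \<Rightarrow> bool" where
  "Linf_on M A f \<longleftrightarrow> f \<in> borel_measurable M \<and>
     (\<exists>C. AE x in M. x \<in> A \<longrightarrow> \<bar>f x\<bar> \<le> C)"

definition Linf_norm :: "'a measure \<Rightarrow> 'a set \<Rightarrow> ('a \<Rightarrow> real) \<Rightarrow> ereal" where
  "Linf_norm M A f = esssup M (\<lambda>x. if x \<in> A then ereal \<bar>f x\<bar> else 0)"

definition poincare_ineq :: "('a \<Rightarrow> 'a measure) \<Rightarrow> 'a measure \<Rightarrow> 'a set \<Rightarrow> real \<Rightarrow> bool" where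
  "poincare_ineq m \<nu> \<Omega> q \<longleftrightarrow>
     (\<exists>lam::real. lam > 0 \<and>
       (\<forall>u \<psi>. Lq_on \<nu> \<Omega> q u \<longrightarrow> Lq_on \<nu> (m_boundary m \<Omega>) q \<psi> \<longrightarrow>
          ennreal lam * (\<integral>\<^sup>+ x. indicator \<Omega> x * ennreal (\<bar>u x\<bar> powr q) \<partial>\<nu>)
          \<le> (\<integral>\<^sup>+ x. indicator \<Omega> x *
                (\<integral>\<^sup>+ y. indicator (m_closure m \<Omega>) y *
                    ennreal (\<bar>ext_bd \<Omega> u \<psi> y - u x\<bar> powr q) \<partial>(m x)) \<partial>\<nu>)
            + (\<integral>\<^sup>+ y. indicator (m_boundary m \<Omega>) y * ennreal (\<bar>\<psi> y\<bar> powr q) \<partial>\<nu>)))"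

end

theory Submission
  imports Defs
begin

(* Write phi_p(t) = |t|^(p-2) t. If |psi| <= M and |u| <= M, then for every x the level
  c |-> integral over Omega_m of phi_p(u_psi(y) - c) dm_x(y) is continuous and nonincreasing,
  nonnegative at -M and nonpositive at M, so the equation can be solved pointwise for the
  value u(x). The resulting solution map is monotone in u; iterating it from the constant -M
  gives a nondecreasing sequence bounded by M, whose limit solves the equation at every point
  by dominated convergence, and the bound |u| <= M is the L-infinity estimate. Of the
  standing assumptions only the invariance of nu is used: it shows that for nu-a.e. x the
  kernel m_x does not charge the set where psi exceeds its essential bound, so psi may be
  replaced by its truncation at level M. *)

definition signed_powr :: "real \<Rightarrow> real \<Rightarrow> real" where
  "signed_powr p t = \<bar>t\<bar> powr (p - 2) * t"

lemma signed_powr_eq_max: "signed_powr p t = max t 0 powr (p - 1) - max (- t) 0 powr (p - 1)"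
proof -
  have "\<bar>t\<bar> powr (p - 2) * \<bar>t\<bar> = \<bar>t\<bar> powr (p - 1)" if "t \<noteq> 0"
    using that by (simp add: powr_mult_base mult.commute)
  then show ?thesis
    by (cases t "0::real" rule: linorder_cases) (auto simp: signed_powr_def max_def)
qed

lemma abs_signed_powr: "\<bar>signed_powr p t\<bar> = \<bar>t\<bar> powr (p - 1)"
  by (cases "t \<ge> 0") (auto simp: signed_powr_eq_max max_def)

lemma signed_powr_zero [simp]: "signed_powr p 0 = 0"
  by (simp add: signed_powr_def)

lemma continuous_on_signed_powr: "p > 1 \<Longrightarrow> continuous_on UNIV (signed_powr p)"
  unfolding signed_powr_eq_max [abs_def]
  by (intro continuous_intros continuous_on_powr') auto

lemma isCont_signed_powr: "p > 1 \<Longrightarrow> isCont (signed_powr p) t"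
  using continuous_on_signed_powr continuous_on_eq_continuous_at by blast

lemma borel_measurable_signed_powr [measurable]: "p > 1 \<Longrightarrow> signed_powr p \<in> borel_measurable borel"
  using continuous_on_signed_powr borel_measurable_continuous_onI by blast

lemma signed_powr_mono:
  assumes "p > 1" "s \<le> t" shows "signed_powr p s \<le> signed_powr p t"
proof -
  have "max s 0 powr (p - 1) \<le> max t 0 powr (p - 1)"
    and "max (- t) 0 powr (p - 1) \<le> max (- s) 0 powr (p - 1)"
    using assms by (auto intro: powr_mono2)
  then show ?thesis by (simp add: signed_powr_eq_max)
qed

lemma signed_powr_nonneg: "p > 1 \<Longrightarrow> 0 \<le> t \<Longrightarrow> 0 \<le> signed_powr p t"
  using signed_powr_mono [of p 0 t] by simp

lemma signed_powr_nonpos: "p > 1 \<Longrightarrow> t \<le> 0 \<Longrightarrow> signed_powr p t \<le> 0"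
  using signed_powr_mono [of p t 0] by simp

lemma abs_signed_powr_le: "p > 1 \<Longrightarrow> \<bar>t\<bar> \<le> B \<Longrightarrow> \<bar>signed_powr p t\<bar> \<le> B powr (p - 1)"
  by (simp add: abs_signed_powr powr_mono2)

lemma tendsto_integral_signed_powr:
  assumes "prob_space N" "K \<in> sets N" "p > 1"
    and [measurable]: "\<And>n. vs n \<in> borel_measurable N" "v \<in> borel_measurable N"
    and bound: "\<And>n y. \<bar>vs n y\<bar> \<le> B"
    and "\<And>y. (\<lambda>n. vs n y) \<longlonglongrightarrow> v y" and "cs \<longlonglongrightarrow> c"
  shows "(\<lambda>n. \<integral>y. indicator K y * signed_powr p (vs n y - cs n) \<partial>N)
           \<longlonglongrightarrow> (\<integral>y. indicator K y * signed_powr p (v y - c) \<partial>N)"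
proof -
  interpret prob_space N by fact
  obtain C where C: "\<And>n. norm (cs n) \<le> C"
    using BseqE [OF convergent_imp_Bseq [OF convergentI [OF \<open>cs \<longlonglongrightarrow> c\<close>]]] by metis
  note [measurable] = \<open>K \<in> sets N\<close> borel_measurable_signed_powr [OF \<open>p > 1\<close>]
  show ?thesis
  proof (rule integral_dominated_convergence [where w = "\<lambda>_. (B + C) powr (p - 1)"])
    show "AE y in N. (\<lambda>n. indicator K y * signed_powr p (vs n y - cs n))
            \<longlonglongrightarrow> indicator K y * signed_powr p (v y - c)"
      using assms by (intro AE_I2 tendsto_mult_left isCont_tendsto_compose [OF isCont_signed_powr]
          tendsto_diff)
    show "AE y in N. norm (indicator K y * signed_powr p (vs n y - cs n)) \<le> (B + C) powr (p - 1)"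
      for n
    proof (intro AE_I2)
      fix y
      have "\<bar>vs n y - cs n\<bar> \<le> B + C" using bound [of n y] C [of n] by simp
      then show "norm (indicator K y * signed_powr p (vs n y - cs n)) \<le> (B + C) powr (p - 1)"
        using abs_signed_powr_le [OF \<open>p > 1\<close>] by (auto simp: indicator_def)
    qed
  qed auto
qed

locale markov_kernel =
  fixes m :: "'a::topological_space \<Rightarrow> 'a measure"
  assumes prob_space_kernel: "\<And>x. prob_space (m x)"
    and sets_kernel: "\<And>x. sets (m x) = sets borel"
    and emeasure_kernel_measurable:
      "\<And>A. A \<in> sets borel \<Longrightarrow> (\<lambda>x. emeasure (m x) A) \<in> borel_measurable borel"
begin

lemma kernel_measurable: "m \<in> borel \<rightarrow>\<^sub>M subprob_algebra borel"
  by (rule measurable_subprob_algebra)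
    (auto simp: sets_kernel emeasure_kernel_measurable prob_space_imp_subprob_space prob_space_kernel)

lemma borel_measurable_kernel_eq: "borel_measurable (m x) = borel_measurable borel"
  by (rule measurable_cong_sets) (simp_all add: sets_kernel)

lemma m_boundary_borel:
  assumes [measurable]: "\<Omega> \<in> sets borel" shows "m_boundary m \<Omega> \<in> sets borel"
proof -
  note [measurable] = emeasure_kernel_measurable [OF assms]
  show ?thesis unfolding m_boundary_def by measurable
qed

lemma m_closure_borel: "\<Omega> \<in> sets borel \<Longrightarrow> m_closure m \<Omega> \<in> sets borel"
  unfolding m_closure_def using m_boundary_borel by blast

end

lemma m_closure_diff: "m_closure m \<Omega> - \<Omega> = m_boundary m \<Omega>"
  by (auto simp: m_closure_def m_boundary_def)

lemma mrw_space_imp_markov_kernel: "mrw_space m \<Longrightarrow> markov_kernel m"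
  by (auto simp: mrw_space_def markov_kernel_def)

locale p_laplacian_iteration = markov_kernel m
  for m :: "'a::topological_space \<Rightarrow> 'a measure" +
  fixes K :: "'a set" and p M :: real
  assumes K_borel [measurable]: "K \<in> sets borel" and p_gt_1: "p > 1" and M_nonneg: "0 \<le> M"
begin

definition admissible :: "('a \<Rightarrow> real) \<Rightarrow> bool" where
  "admissible v \<longleftrightarrow> v \<in> borel_measurable borel \<and> (\<forall>y. \<bar>v y\<bar> \<le> M)"

definition p_laplacian :: "('a \<Rightarrow> real) \<Rightarrow> 'a \<Rightarrow> real \<Rightarrow> real" where
  "p_laplacian v x c = (\<integral>y. indicator K y * signed_powr p (v y - c) \<partial>m x)"

text \<open>A supremum over rationals rather than reals keeps \<open>root v\<close> Borel measurable.\<close>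
definition root_candidate :: "('a \<Rightarrow> real) \<Rightarrow> 'a \<Rightarrow> rat \<Rightarrow> real" where
  "root_candidate v x q =
     (if - M \<le> of_rat q \<and> of_rat q \<le> M \<and> 0 < p_laplacian v x (of_rat q) then of_rat q else - M)"

definition root :: "('a \<Rightarrow> real) \<Rightarrow> 'a \<Rightarrow> real" where
  "root v x = (SUP q. root_candidate v x q)"

definition truncation :: "('a \<Rightarrow> real) \<Rightarrow> 'a \<Rightarrow> real" where
  "truncation \<psi> y = max (- M) (min M (\<psi> y))"

lemma admissibleD:
  assumes "admissible v" shows "v \<in> borel_measurable borel" "\<bar>v y\<bar> \<le> M"
  using assms by (auto simp: admissible_def)

lemma admissible_ext_bd:
  assumes [measurable]: "\<Omega> \<in> sets borel" and "admissible u" "admissible \<psi>"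
  shows "admissible (ext_bd \<Omega> u \<psi>)"
proof -
  note [measurable] = admissibleD(1) [OF \<open>admissible u\<close>] admissibleD(1) [OF \<open>admissible \<psi>\<close>]
  have "ext_bd \<Omega> u \<psi> \<in> borel_measurable borel"
    unfolding ext_bd_def [abs_def] by measurable
  then show ?thesis using assms by (auto simp: admissible_def ext_bd_def)
qed

lemma admissible_truncation:
  assumes [measurable]: "\<psi> \<in> borel_measurable borel" shows "admissible (truncation \<psi>)"
proof -
  have "truncation \<psi> \<in> borel_measurable borel" unfolding truncation_def [abs_def] by measurable
  then show ?thesis using M_nonneg by (auto simp: admissible_def truncation_def abs_le_iff)
qed

lemma integrable_p_laplacian:
  assumes "admissible v"
  shows "integrable (m x) (\<lambda>y. indicator K y * signed_powr p (v y - c))"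
proof -
  interpret prob_space "m x" by (rule prob_space_kernel)
  note [measurable] = admissibleD(1) [OF assms] borel_measurable_signed_powr [OF p_gt_1]
  show ?thesis
  proof (rule integrable_const_bound)
    show "(\<lambda>y. indicator K y * signed_powr p (v y - c)) \<in> borel_measurable (m x)"
      unfolding borel_measurable_kernel_eq by measurable
    have "\<bar>signed_powr p (v y - c)\<bar> \<le> (M + \<bar>c\<bar>) powr (p - 1)" for y
      using admissibleD(2) [OF assms, of y] by (intro abs_signed_powr_le p_gt_1) linarith
    then show "AE y in m x. norm (indicator K y * signed_powr p (v y - c)) \<le> (M + \<bar>c\<bar>) powr (p - 1)"
      by (simp add: indicator_def)
  qed
qed

lemma p_laplacian_AE_cong:
  assumes "admissible w" and [measurable]: "v \<in> borel_measurable borel"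
    and "AE y in m x. y \<in> K \<longrightarrow> v y = w y"
  shows "integrable (m x) (\<lambda>y. indicator K y * signed_powr p (v y - c))"
    and "(\<integral>y. indicator K y * signed_powr p (v y - c) \<partial>m x) = p_laplacian w x c"
proof -
  let ?f = "\<lambda>v y. indicator K y * signed_powr p (v y - c)"
  note [measurable] = admissibleD(1) [OF assms(1)] borel_measurable_signed_powr [OF p_gt_1]
  have meas: "(\<lambda>y. indicator K y * signed_powr p (v y - c)) \<in> borel_measurable (m x)"
      "(\<lambda>y. indicator K y * signed_powr p (w y - c)) \<in> borel_measurable (m x)"
    unfolding borel_measurable_kernel_eq by measurable
  have eq: "AE y in m x. ?f w y = ?f v y"
    using assms(3) by eventually_elim (auto simp: indicator_def)
  show "integrable (m x) (?f v)"
    by (rule integrable_cong_AE_imp [OF integrable_p_laplacian [OF assms(1)] meas(1) eq])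
  show "integral\<^sup>L (m x) (?f v) = p_laplacian w x c"
    unfolding p_laplacian_def by (rule integral_cong_AE [OF meas(1,2) AE_symmetric [OF eq]])
qed

lemma p_laplacian_truncation:
  assumes [measurable]: "\<Omega> \<in> sets borel" "\<psi> \<in> borel_measurable borel"
    and "admissible u" and "AE y in m x. y \<in> K - \<Omega> \<longrightarrow> \<bar>\<psi> y\<bar> \<le> M"
  shows "integrable (m x) (\<lambda>y. indicator K y * signed_powr p (ext_bd \<Omega> u \<psi> y - c))"
    and "p_laplacian (ext_bd \<Omega> u \<psi>) x c = p_laplacian (ext_bd \<Omega> u (truncation \<psi>)) x c"
proof -
  note [measurable] = admissibleD(1) [OF \<open>admissible u\<close>]
  have "ext_bd \<Omega> u \<psi> \<in> borel_measurable borel" unfolding ext_bd_def [abs_def] by measurable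
  moreover have "AE y in m x. y \<in> K \<longrightarrow> ext_bd \<Omega> u \<psi> y = ext_bd \<Omega> u (truncation \<psi>) y"
    using assms(4) by eventually_elim (auto simp: ext_bd_def truncation_def)
  moreover note admissible_ext_bd [OF assms(1) \<open>admissible u\<close> admissible_truncation [OF assms(2)]]
  ultimately show "integrable (m x) (\<lambda>y. indicator K y * signed_powr p (ext_bd \<Omega> u \<psi> y - c))"
    and "p_laplacian (ext_bd \<Omega> u \<psi>) x c = p_laplacian (ext_bd \<Omega> u (truncation \<psi>)) x c"
    using p_laplacian_AE_cong unfolding p_laplacian_def [of "ext_bd \<Omega> u \<psi>"] by blast+
qed

lemma isCont_p_laplacian:
  assumes "admissible v" shows "isCont (p_laplacian v x) c"
  unfolding continuous_at_sequentially comp_def p_laplacian_def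
proof (intro allI impI)
  fix cs assume "cs \<longlonglongrightarrow> c"
  with assms show "(\<lambda>n. \<integral>y. indicator K y * signed_powr p (v y - cs n) \<partial>m x)
      \<longlonglongrightarrow> (\<integral>y. indicator K y * signed_powr p (v y - c) \<partial>m x)"
    by (intro tendsto_integral_signed_powr [where B = M] prob_space_kernel p_gt_1)
      (auto simp: admissible_def sets_kernel borel_measurable_kernel_eq)
qed

lemma p_laplacian_mono:
  assumes "admissible v" "admissible w" "\<And>y. v y \<le> w y"
  shows "p_laplacian v x c \<le> p_laplacian w x c"
  unfolding p_laplacian_def
  using integrable_p_laplacian [OF assms(1)] integrable_p_laplacian [OF assms(2)]
proof (rule integral_mono)
  show "indicator K y * signed_powr p (v y - c) \<le> indicator K y * signed_powr p (w y - c)" for y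
    using signed_powr_mono [OF p_gt_1, of "v y - c" "w y - c"] assms(3) [of y]
    by (auto simp: indicator_def)
qed

lemma p_laplacian_lower_nonneg:
  assumes "admissible v" shows "0 \<le> p_laplacian v x (- M)"
  unfolding p_laplacian_def
proof (intro integral_nonneg_AE AE_I2)
  fix y
  have "0 \<le> signed_powr p (v y - - M)"
    using admissibleD(2) [OF assms, of y] by (intro signed_powr_nonneg p_gt_1) linarith
  then show "0 \<le> indicator K y * signed_powr p (v y - - M)" by simp
qed

lemma p_laplacian_upper_nonpos:
  assumes "admissible v" shows "p_laplacian v x M \<le> 0"
proof -
  have "0 \<le> (\<integral>y. indicator K y * - signed_powr p (v y - M) \<partial>m x)"
  proof (intro integral_nonneg_AE AE_I2)
    fix y
    have "signed_powr p (v y - M) \<le> 0"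
      using admissibleD(2) [OF assms, of y] by (intro signed_powr_nonpos p_gt_1) linarith
    then show "0 \<le> indicator K y * - signed_powr p (v y - M)" by (simp add: indicator_def)
  qed
  then show ?thesis unfolding p_laplacian_def by simp
qed

lemma root_candidate_bounds: "- M \<le> root_candidate v x q" "root_candidate v x q \<le> M"
  using M_nonneg by (auto simp: root_candidate_def)

lemma bdd_above_root_candidate: "bdd_above (range (root_candidate v x))"
  using root_candidate_bounds by (intro bdd_aboveI) blast

lemma root_candidate_le_root: "root_candidate v x q \<le> root v x"
  unfolding root_def by (rule cSUP_upper [OF UNIV_I bdd_above_root_candidate])

lemma root_bounds: "- M \<le> root v x" "root v x \<le> M"
  using root_candidate_le_root [of v x 0] root_candidate_bounds(1) [of v x 0]
  by (auto simp: root_def intro!: cSUP_least root_candidate_bounds(2))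

lemma p_laplacian_root_candidate_nonneg:
  assumes "admissible v" shows "0 \<le> p_laplacian v x (root_candidate v x q)"
  using p_laplacian_lower_nonneg [OF assms, of x] by (simp add: root_candidate_def)

lemma p_laplacian_root_nonneg:
  assumes "admissible v" shows "0 \<le> p_laplacian v x (root v x)"
proof (rule ccontr)
  let ?c = "root v x"
  assume "\<not> 0 \<le> p_laplacian v x ?c"
  then have "p_laplacian v x ?c < 0" by simp
  from LIM_fun_less_zero [OF isCont_p_laplacian [OF assms, unfolded isCont_def] this]
  obtain d where "0 < d" and d: "\<forall>y. y \<noteq> ?c \<and> \<bar>?c - y\<bar> < d \<longrightarrow> p_laplacian v x y < 0"
    by blast
  have "?c - d < root v x" using \<open>0 < d\<close> by simp
  then obtain q where q: "?c - d < root_candidate v x q"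
    unfolding root_def using less_cSUP_iff [OF UNIV_not_empty bdd_above_root_candidate] by blast
  have "root_candidate v x q \<le> ?c" by (rule root_candidate_le_root)
  then have "p_laplacian v x (root_candidate v x q) < 0"
    using d \<open>p_laplacian v x ?c < 0\<close> q by (cases "root_candidate v x q = ?c") auto
  with p_laplacian_root_candidate_nonneg [OF assms] show False by (simp add: not_le [symmetric])
qed

lemma p_laplacian_root_nonpos:
  assumes "admissible v" shows "p_laplacian v x (root v x) \<le> 0"
proof (rule ccontr)
  let ?c = "root v x"
  assume "\<not> p_laplacian v x ?c \<le> 0"
  then have "0 < p_laplacian v x ?c" by simp
  then have "?c \<noteq> M" using p_laplacian_upper_nonpos [OF assms, of x] by auto
  with root_bounds(2) have "?c < M" by (simp add: order_less_le)
  from LIM_fun_gt_zero [OF isCont_p_laplacian [OF assms, unfolded isCont_def] \<open>0 < p_laplacian v x ?c\<close>]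
  obtain d where "0 < d" and d: "\<forall>y. y \<noteq> ?c \<and> \<bar>?c - y\<bar> < d \<longrightarrow> 0 < p_laplacian v x y"
    by blast
  obtain r where "r \<in> \<rat>" "?c < r" "r < min (?c + d) M"
    using Rats_dense_in_real [of ?c "min (?c + d) M"] \<open>?c < M\<close> \<open>0 < d\<close> by auto
  from \<open>r \<in> \<rat>\<close> obtain q where r: "r = of_rat q" by (rule Rats_cases)
  have "0 < p_laplacian v x r" using d \<open>?c < r\<close> \<open>r < min (?c + d) M\<close> by auto
  moreover have "- M \<le> r" using root_bounds(1) [of v x] \<open>?c < r\<close> by simp
  ultimately have "root_candidate v x q = r"
    using \<open>r < min (?c + d) M\<close> by (simp add: root_candidate_def r)
  with root_candidate_le_root [of v x q] \<open>?c < r\<close> show False by simp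
qed

lemma p_laplacian_root: "admissible v \<Longrightarrow> p_laplacian v x (root v x) = 0"
  using p_laplacian_root_nonneg p_laplacian_root_nonpos by (simp add: order_antisym)

lemma root_mono:
  assumes "admissible v" "admissible w" "\<And>y. v y \<le> w y"
  shows "root v x \<le> root w x"
  unfolding root_def
proof (rule cSUP_mono [OF _ bdd_above_root_candidate])
  show "\<exists>q'\<in>UNIV. root_candidate v x q \<le> root_candidate w x q'" for q
    using p_laplacian_mono [OF assms, of x "of_rat q"]
    by (intro bexI [of _ q]) (auto simp: root_candidate_def)
qed simp

lemma borel_measurable_p_laplacian:
  assumes "admissible v" shows "(\<lambda>x. p_laplacian v x c) \<in> borel_measurable borel"
proof -
  note [measurable] = admissibleD(1) [OF assms] borel_measurable_signed_powr [OF p_gt_1]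
  have "(\<lambda>y. indicator K y * signed_powr p (v y - c)) \<in> borel_measurable borel"
    by measurable
  from measurable_compose [OF kernel_measurable integral_measurable_subprob_algebra [OF this]]
  show ?thesis unfolding p_laplacian_def by (simp add: comp_def)
qed

lemma admissible_root:
  assumes "admissible v" shows "admissible (root v)"
proof -
  note [measurable] = borel_measurable_p_laplacian [OF assms]
  have [measurable]: "(\<lambda>x. root_candidate v x q) \<in> borel_measurable borel" for q
    unfolding root_candidate_def by measurable
  have "root v \<in> borel_measurable borel"
    unfolding root_def by (rule borel_measurable_cSUP) (auto intro: bdd_above_root_candidate)
  moreover have "\<bar>root v x\<bar> \<le> M" for x
    using root_bounds [of v x] by linarith
  ultimately show ?thesis by (simp add: admissible_def)
qed

definition iterate :: "'a set \<Rightarrow> ('a \<Rightarrow> real) \<Rightarrow> nat \<Rightarrow> 'a \<Rightarrow> real" where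
  "iterate \<Omega> \<psi> n = ((\<lambda>u. root (ext_bd \<Omega> u \<psi>)) ^^ n) (\<lambda>_. - M)"

context
  fixes \<Omega> :: "'a set" and \<psi> :: "'a \<Rightarrow> real"
  assumes \<Omega>_borel: "\<Omega> \<in> sets borel" and admissible_boundary: "admissible \<psi>"
begin

lemma iterate_0: "iterate \<Omega> \<psi> 0 = (\<lambda>_. - M)"
  and iterate_Suc: "iterate \<Omega> \<psi> (Suc n) = root (ext_bd \<Omega> (iterate \<Omega> \<psi> n) \<psi>)"
  by (simp_all add: iterate_def)

lemma admissible_iterate: "admissible (iterate \<Omega> \<psi> n)"
proof (induction n)
  case 0
  show ?case using M_nonneg by (simp add: iterate_0 admissible_def)
next
  case (Suc n)
  then show ?case
    unfolding iterate_Suc by (intro admissible_root admissible_ext_bd \<Omega>_borel admissible_boundary)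
qed

lemma iterate_le_Suc: "iterate \<Omega> \<psi> n x \<le> iterate \<Omega> \<psi> (Suc n) x"
proof (induction n arbitrary: x)
  case 0
  show ?case using root_bounds(1) by (simp add: iterate_0 iterate_Suc)
next
  case (Suc n)
  have "ext_bd \<Omega> (iterate \<Omega> \<psi> n) \<psi> y \<le> ext_bd \<Omega> (iterate \<Omega> \<psi> (Suc n)) \<psi> y" for y
    using Suc by (simp add: ext_bd_def)
  then have "root (ext_bd \<Omega> (iterate \<Omega> \<psi> n) \<psi>) x \<le> root (ext_bd \<Omega> (iterate \<Omega> \<psi> (Suc n)) \<psi>) x"
    by (intro root_mono admissible_ext_bd \<Omega>_borel admissible_iterate admissible_boundary)
  then show ?case by (simp only: iterate_Suc)
qed

lemma iterate_converges:
  obtains u where "admissible u" "\<And>x. (\<lambda>n. iterate \<Omega> \<psi> n x) \<longlonglongrightarrow> u x"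
proof
  let ?u = "\<lambda>x. SUP n. iterate \<Omega> \<psi> n x"
  have bounded: "\<bar>iterate \<Omega> \<psi> n x\<bar> \<le> M" for n x
    using admissibleD(2) [OF admissible_iterate] .
  then have bdd: "bdd_above (range (\<lambda>n. iterate \<Omega> \<psi> n x))" for x
    by (intro bdd_aboveI [where M = M]) (auto simp: abs_le_iff)
  show lim: "(\<lambda>n. iterate \<Omega> \<psi> n x) \<longlonglongrightarrow> ?u x" for x
    by (rule LIMSEQ_incseq_SUP [OF bdd]) (simp add: incseq_SucI iterate_le_Suc)
  have "?u \<in> borel_measurable borel"
    using lim admissibleD(1) [OF admissible_iterate] by (rule borel_measurable_LIMSEQ_real)
  moreover have "\<bar>?u x\<bar> \<le> M" for x
  proof -
    have "- M \<le> ?u x" using cSUP_upper [OF UNIV_I bdd, of 0 x] by (simp add: iterate_0)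
    moreover have "?u x \<le> M" using bounded by (intro cSUP_least) (auto simp: abs_le_iff)
    ultimately show ?thesis by simp
  qed
  ultimately show "admissible ?u" by (simp add: admissible_def)
qed

lemma exists_p_harmonic: "\<exists>u. admissible u \<and> (\<forall>x. p_laplacian (ext_bd \<Omega> u \<psi>) x (u x) = 0)"
proof -
  obtain u where u: "admissible u" and lim: "\<And>x. (\<lambda>n. iterate \<Omega> \<psi> n x) \<longlonglongrightarrow> u x"
    using iterate_converges by blast
  have "p_laplacian (ext_bd \<Omega> u \<psi>) x (u x) = 0" for x
  proof (rule LIMSEQ_unique)
    show "(\<lambda>n. p_laplacian (ext_bd \<Omega> (iterate \<Omega> \<psi> n) \<psi>) x (iterate \<Omega> \<psi> (Suc n) x))
        \<longlonglongrightarrow> p_laplacian (ext_bd \<Omega> u \<psi>) x (u x)"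
      unfolding p_laplacian_def
    proof (rule tendsto_integral_signed_powr [where B = M, OF prob_space_kernel _ p_gt_1])
      show "(\<lambda>n. ext_bd \<Omega> (iterate \<Omega> \<psi> n) \<psi> y) \<longlonglongrightarrow> ext_bd \<Omega> u \<psi> y" for y
        by (simp add: ext_bd_def lim)
      show "(\<lambda>n. iterate \<Omega> \<psi> (Suc n) x) \<longlonglongrightarrow> u x"
        using lim by (rule LIMSEQ_Suc)
    qed (use admissible_ext_bd [OF \<Omega>_borel admissible_iterate admissible_boundary]
           admissible_ext_bd [OF \<Omega>_borel u admissible_boundary]
         in \<open>auto simp: admissible_def sets_kernel borel_measurable_kernel_eq\<close>)
    show "(\<lambda>n. p_laplacian (ext_bd \<Omega> (iterate \<Omega> \<psi> n) \<psi>) x (iterate \<Omega> \<psi> (Suc n) x)) \<longlonglongrightarrow> 0"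
      unfolding iterate_Suc
      by (simp add: p_laplacian_root admissible_ext_bd \<Omega>_borel admissible_iterate admissible_boundary)
  qed
  with u show ?thesis by blast
qed

end

end

lemma invariant_measure_AE_kernel:
  fixes m :: "'a::polish_space \<Rightarrow> 'a measure"
  assumes "invariant_measure m \<nu>" "sets \<nu> = sets borel" and "markov_kernel m"
    and "{y. P y} \<in> sets borel" and "AE y in \<nu>. P y"
  shows "AE x in \<nu>. AE y in m x. P y"
proof -
  interpret markov_kernel m by fact
  let ?N = "{y. \<not> P y}"
  have space: "space \<nu> = UNIV" using sets_eq_imp_space_eq [OF assms(2)] by simp
  have N: "?N \<in> sets borel"
    using sets.compl_sets [OF assms(4)] by (simp add: set_diff_eq)
  then have "emeasure \<nu> ?N = 0"
    using assms(2,5) by (subst (asm) AE_iff_measurable [where N = ?N]) (auto simp: space)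
  then have "(\<integral>\<^sup>+ x. emeasure (m x) ?N \<partial>\<nu>) = 0"
    using assms(1,2) N by (simp add: invariant_measure_def)
  moreover have "(\<lambda>x. emeasure (m x) ?N) \<in> borel_measurable \<nu>"
    using emeasure_kernel_measurable [OF N] by (simp add: measurable_cong_sets [OF assms(2) refl])
  ultimately have "AE x in \<nu>. emeasure (m x) ?N = 0"
    by (simp add: nn_integral_0_iff_AE)
  then show ?thesis
  proof eventually_elim
    case (elim x)
    have "space (m x) = UNIV" using sets_eq_imp_space_eq [OF sets_kernel] by simp
    with elim N show ?case by (subst AE_iff_measurable [where N = ?N]) (auto simp: sets_kernel)
  qed
qed

lemma Lq_on_bounded:
  assumes "emeasure M (space M) < \<infinity>" "f \<in> borel_measurable M" "\<And>x. \<bar>f x\<bar> \<le> c" "0 \<le> q"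
  shows "Lq_on M A q f"
proof -
  have "(\<integral>\<^sup>+ x. indicator A x * ennreal (\<bar>f x\<bar> powr q) \<partial>M) \<le> (\<integral>\<^sup>+ x. ennreal (c powr q) \<partial>M)"
    using assms(3,4) by (intro nn_integral_mono) (auto simp: indicator_def intro!: ennreal_leI powr_mono2)
  also have "\<dots> = ennreal (c powr q) * emeasure M (space M)" by simp
  also have "\<dots> < \<infinity>" using assms(1) by (simp add: ennreal_mult_less_top)
  finally show ?thesis using assms(2) by (simp add: Lq_on_def)
qed

lemma Linf_norm_nonneg: "emeasure M (space M) \<noteq> 0 \<Longrightarrow> 0 \<le> Linf_norm M A f"
  using esssup_mono [of "\<lambda>_. 0" M "\<lambda>x. if x \<in> A then ereal \<bar>f x\<bar> else 0"]
  by (simp add: Linf_norm_def esssup_const)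

lemma Linf_norm_le:
  assumes [measurable]: "f \<in> borel_measurable M" "A \<in> sets M"
    and "0 \<le> c" "\<And>x. x \<in> A \<Longrightarrow> \<bar>f x\<bar> \<le> c"
  shows "Linf_norm M A f \<le> ereal c"
  unfolding Linf_norm_def using assms(3,4) by (intro esssup_I) auto

lemma Linf_on_obtain_bound:
  assumes "Linf_on M A f" "emeasure M (space M) \<noteq> 0"
  obtains c where "0 \<le> c" "AE x in M. x \<in> A \<longrightarrow> \<bar>f x\<bar> \<le> c"
    "Linf_norm M A f \<in> {\<infinity>, ereal c}"
proof (cases "Linf_norm M A f = \<infinity>")
  case True
  obtain C where "AE x in M. x \<in> A \<longrightarrow> \<bar>f x\<bar> \<le> C"
    using assms(1) by (auto simp: Linf_on_def)
  then have "AE x in M. x \<in> A \<longrightarrow> \<bar>f x\<bar> \<le> max 0 C"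
    by eventually_elim auto
  with True show ?thesis by (intro that [of "max 0 C"]) auto
next
  case False
  moreover have "0 \<le> Linf_norm M A f" using assms(2) by (rule Linf_norm_nonneg)
  ultimately obtain c where c: "Linf_norm M A f = ereal c" "0 \<le> c"
    by (cases "Linf_norm M A f") auto
  have "AE x in M. (if x \<in> A then ereal \<bar>f x\<bar> else 0) \<le> Linf_norm M A f"
    unfolding Linf_norm_def by (rule esssup_AE)
  then have "AE x in M. x \<in> A \<longrightarrow> \<bar>f x\<bar> \<le> c"
    by eventually_elim (auto simp: c)
  with c show ?thesis by (intro that [of c]) auto
qed

theorem mainTheorem5:
  fixes m :: "'a::polish_space \<Rightarrow> 'a measure" and \<nu> :: "'a measure"
    and \<Omega> :: "'a set" and \<psi> :: "'a \<Rightarrow> real" and p :: real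
  assumes "mrw_space m"
    and "sets \<nu> = sets borel"
    and "invariant_measure m \<nu>" and "reversible_measure m \<nu>"
    and "sigma_finite_measure \<nu>" and "emeasure \<nu> UNIV < \<infinity>"
    and "ergodic_measure m \<nu>"
    and "bounded \<Omega>" and "\<Omega> \<in> sets \<nu>"
    and "0 < emeasure \<nu> \<Omega>" and "emeasure \<nu> \<Omega> < emeasure \<nu> UNIV"
    and "Linf_on \<nu> (m_boundary m \<Omega>) \<psi>"
    and "p > 1"
    and "poincare_ineq m \<nu> \<Omega> p"
  shows "\<exists>u. Lq_on \<nu> \<Omega> p u \<and>
     (AE x in \<nu>. x \<in> \<Omega> \<longrightarrow>
        integrable (m x) (\<lambda>y. indicator (m_closure m \<Omega>) y *
           (\<bar>ext_bd \<Omega> u \<psi> y - u x\<bar> powr (p - 2) * (ext_bd \<Omega> u \<psi> y - u x))) \<and>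
        - (\<integral>y. indicator (m_closure m \<Omega>) y *
           (\<bar>ext_bd \<Omega> u \<psi> y - u x\<bar> powr (p - 2) * (ext_bd \<Omega> u \<psi> y - u x)) \<partial>(m x)) = 0) \<and>
     Linf_norm \<nu> \<Omega> u \<le> Linf_norm \<nu> (m_boundary m \<Omega>) \<psi>"
proof -
  have kernel: "markov_kernel m" using assms(1) by (rule mrw_space_imp_markov_kernel)
  interpret markov_kernel m by (rule kernel)
  have space: "space \<nu> = UNIV" using sets_eq_imp_space_eq [OF assms(2)] by simp
  have meas_eq: "borel_measurable \<nu> = borel_measurable borel"
    by (rule measurable_cong_sets) (simp_all add: assms(2))
  have \<Omega> [measurable]: "\<Omega> \<in> sets borel" and \<psi> [measurable]: "\<psi> \<in> borel_measurable borel"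
    using assms(2,9,12) by (simp_all add: Linf_on_def meas_eq)
  note [measurable] = m_boundary_borel [OF \<Omega>]
  have "emeasure \<nu> (space \<nu>) \<noteq> 0" using assms(11) space by auto
  then obtain M where "0 \<le> M" and \<psi>_bound: "AE y in \<nu>. y \<in> m_boundary m \<Omega> \<longrightarrow> \<bar>\<psi> y\<bar> \<le> M"
    and \<psi>_norm: "Linf_norm \<nu> (m_boundary m \<Omega>) \<psi> \<in> {\<infinity>, ereal M}"
    using Linf_on_obtain_bound [OF assms(12)] by blast
  interpret p_laplacian_iteration m "m_closure m \<Omega>" p M
    using \<open>0 \<le> M\<close> assms(13) m_closure_borel [OF \<Omega>] by unfold_locales
  obtain u where u: "admissible u" and solves: "\<And>x. p_laplacian (ext_bd \<Omega> u (truncation \<psi>)) x (u x) = 0"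
    using exists_p_harmonic [OF \<Omega> admissible_truncation [OF \<psi>]] by blast
  have "AE x in \<nu>. AE y in m x. y \<in> m_boundary m \<Omega> \<longrightarrow> \<bar>\<psi> y\<bar> \<le> M"
    by (rule invariant_measure_AE_kernel [OF assms(3,2) kernel _ \<psi>_bound]) measurable
  then have "AE x in \<nu>. x \<in> \<Omega> \<longrightarrow> p_laplacian (ext_bd \<Omega> u \<psi>) x (u x) = 0 \<and>
      integrable (m x) (\<lambda>y. indicator (m_closure m \<Omega>) y * signed_powr p (ext_bd \<Omega> u \<psi> y - u x))"
    using p_laplacian_truncation [OF \<Omega> \<psi> u] solves by (auto simp: m_closure_diff)
  moreover have "Lq_on \<nu> \<Omega> p u"
    using assms(6,13) admissibleD [OF u] by (intro Lq_on_bounded) (auto simp: space meas_eq)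
  moreover have "Linf_norm \<nu> \<Omega> u \<le> Linf_norm \<nu> (m_boundary m \<Omega>) \<psi>"
    using Linf_norm_le [of u \<nu> \<Omega> M] admissibleD [OF u] \<psi>_norm \<open>0 \<le> M\<close> assms(9)
    by (auto simp: meas_eq)
  ultimately show ?thesis unfolding p_laplacian_def signed_powr_def by auto
qed

end
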